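(* In the setting of the context, for every $j\in[N]$, $s\in\Gamma$, $k\in[n]$ and $\dagger\in\{+,-\}$, $$\nu^{s\bar P}\big(\pi_{s\bar P}\varphi(Z^\dagger_{j,s,k})\big)\le\frac1{M_k}\int u^\dagger_k\,d\nu^{sP}.$$
   Context: Standing setting: $\Gamma$ countably infinite, $n\in\mathbb N$, $\mathbb Z\Gamma$ the integral group ring (product $(fg)_t=\sum_sf_{ts^{-1}}g_s$, involution $(f^* )_s=f_{s^{-1}}$, $(f^* )^{(km)}=(f^{(mk)})^*$). $f=M-g\in M_n(\mathbb Z\Gamma)$, $M=\mathrm{diag}(M_1,\dots,M_n)$ positive integers, $M_k>\sum_m\|g^{(km)}\|_1$, and a subsemigroup $P\subseteq\Gamma\setminus\{e_\Gamma\}$ containing all $\mathrm{supp}(g^{(km)})$; $\bar P=P\cup\{e_\Gamma\}$, $\bar M=\max_kM_k$, $S_f=\prod_k\{0,\dots,M_k-1\}$, $Y=S_f^\Gamma$ (row vectors, entries $y_{s,k}$, $(yF)_m=\sum_ky_kF^{(km)}$ by convolution). $\nu$ is a probability measure on $S_f$ whose marginal on each factor $\{0,\dots,M_k-1\}$ is uniform; for $E\subseteq\Gamma$, $\nu^E$ is the product measure on $S_f^E$ and $\pi_E:S_f^\Gamma\to S_f^E$ the restriction. $N\ge\bar M\|(f^* )^{-1}\|_{1,\infty}$ fixed integer, $V=(\{-N,\dots,N\}^\Gamma)^n\setminus\{0\}$, $Z=\{(y,c)\in Y\times V: y+cf^*\in Y\}$, $\varphi:Y\times V\to Y$ the projection,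 $Z^+_{j,s,k}=\{(y,c)\in Z:\max_{t,m}|c_{t,m}|=c_{s,k}=j\}$, $Z^-_{j,s,k}=\{(y,c)\in Z:\max_{t,m}|c_{t,m}|=-c_{s,k}=j\}$. $A_k=\{(a,m):g^{(km)}_a\neq0\}$; for $B_k\subseteq A_k$ and $\dagger\in\{+,-\}$, $Z^\dagger_{j,s,k,B_k}$ is the set of $(y,c)\in Z^\dagger_{j,s,k}$ with $c_{sa,m}=\dagger\mathrm{sgn}(g^{(km)}_a)j$ for $(a,m)\in B_k$ and $c_{sa,m}\neq\dagger\mathrm{sgn}(g^{(km)}_a)j$ for $(a,m)\in A_k\setminus B_k$, and $Z^\dagger_{j,s,k,B_k,i}=\{(y,c)\in Z^\dagger_{j,s,k,B_k}:y_{s,k}=i\}$. Finally $u^\dagger_k:S_f^{sP}\to\mathbb R$ is $u^\dagger_k=\sum_{i=0}^{M_k-1}\chi_{\pi_{sP}\varphi(\bigcup_{B_k\subseteq A_k}Z^\dagger_{j,s,k,B_k,i})}$ ($\chi$ denotes characteristic function). *)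

theory Defs
  imports "HOL-Probability.Probability"
begin

text \<open>The group Gamma is a type of class group_add, written additively:
  the product s t is s + t, the identity is 0, the inverse of s is - s.
  Elements of the integral group ring are finitely supported functions 'g => int;
  an n x n matrix is a function nat => nat => 'g => int (entries k m with k,m < n).\<close>

definition supp :: "('g \<Rightarrow> 'a::zero) \<Rightarrow> 'g set" where
  "supp F = {u. F u \<noteq> 0}"

definition gr_star :: "('g::group_add \<Rightarrow> 'a) \<Rightarrow> 'g \<Rightarrow> 'a" where
  "gr_star F u = F (- u)"

definition mat_star :: "(nat \<Rightarrow> nat \<Rightarrow> 'g::group_add \<Rightarrow> 'a) \<Rightarrow> nat \<Rightarrow> nat \<Rightarrow> 'g \<Rightarrow> 'a" where
  "mat_star F k m = gr_star (F m k)"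

definition fmat :: "(nat \<Rightarrow> nat) \<Rightarrow> (nat \<Rightarrow> nat \<Rightarrow> 'g::zero \<Rightarrow> int) \<Rightarrow> nat \<Rightarrow> nat \<Rightarrow> 'g \<Rightarrow> int" where
  "fmat M g k m u = (if k = m \<and> u = 0 then int (M k) else 0) - g k m u"

definition vconv :: "('g::group_add \<Rightarrow> int) \<Rightarrow> ('g \<Rightarrow> int) \<Rightarrow> 'g \<Rightarrow> int" where
  "vconv x F t = (\<Sum>u\<in>supp F. x (t - u) * F u)"

definition row_mult :: "nat \<Rightarrow> ('g::group_add \<Rightarrow> nat \<Rightarrow> int) \<Rightarrow> (nat \<Rightarrow> nat \<Rightarrow> 'g \<Rightarrow> int) \<Rightarrow> 'g \<Rightarrow> nat \<Rightarrow> int" where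
  "row_mult n y F t m = (if m < n then (\<Sum>k<n. vconv (\<lambda>t'. y t' k) (F k m) t) else 0)"

definition l1norm :: "('g \<Rightarrow> real) \<Rightarrow> real" where
  "l1norm x = (\<Sum>\<^sub>\<infinity>u. \<bar>x u\<bar>)"

definition is_l1_inverse :: "nat \<Rightarrow> (nat \<Rightarrow> nat \<Rightarrow> 'g::group_add \<Rightarrow> int) \<Rightarrow> (nat \<Rightarrow> nat \<Rightarrow> 'g \<Rightarrow> real) \<Rightarrow> bool" where
  "is_l1_inverse n F h \<longleftrightarrow>
     (\<forall>k<n. \<forall>m<n. (\<lambda>u. \<bar>h k m u\<bar>) summable_on UNIV) \<and>
     (\<forall>k<n. \<forall>m<n. \<forall>t. (\<Sum>l<n. \<Sum>u\<in>supp (F k l). real_of_int (F k l u) * h l m (- u + t))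
                       = (if k = m \<and> t = 0 then 1 else 0)) \<and>
     (\<forall>k<n. \<forall>m<n. \<forall>t. (\<Sum>l<n. \<Sum>u\<in>supp (F l m). h k l (t - u) * real_of_int (F l m u))
                       = (if k = m \<and> t = 0 then 1 else 0))"

text \<open>The norm ||A||_{1,infinity}: operator norm of y |-> yA on (l^infinity)^n (row vectors),
  i.e. max over columns m of sum_k ||A^(km)||_1.\<close>
definition norm_1inf :: "nat \<Rightarrow> (nat \<Rightarrow> nat \<Rightarrow> 'g \<Rightarrow> real) \<Rightarrow> real" where
  "norm_1inf n A = Max ((\<lambda>m. \<Sum>k<n. l1norm (A k m)) ` {..<n})"

definition Sf :: "nat \<Rightarrow> (nat \<Rightarrow> nat) \<Rightarrow> (nat \<Rightarrow> int) set" where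
  "Sf n M = {x. (\<forall>k<n. 0 \<le> x k \<and> x k < int (M k)) \<and> (\<forall>k. n \<le> k \<longrightarrow> x k = 0)}"

definition Yset :: "nat \<Rightarrow> (nat \<Rightarrow> nat) \<Rightarrow> ('g \<Rightarrow> nat \<Rightarrow> int) set" where
  "Yset n M = {y. \<forall>s. y s \<in> Sf n M}"

definition Vset :: "nat \<Rightarrow> nat \<Rightarrow> ('g \<Rightarrow> nat \<Rightarrow> int) set" where
  "Vset n N = {c. (\<forall>t m. m < n \<longrightarrow> \<bar>c t m\<bar> \<le> int N) \<and> (\<forall>t m. n \<le> m \<longrightarrow> c t m = 0)
                  \<and> c \<noteq> (\<lambda>_ _. 0)}"

definition Zset :: "nat \<Rightarrow> (nat \<Rightarrow> nat) \<Rightarrow> nat \<Rightarrow> (nat \<Rightarrow> nat \<Rightarrow> 'g::group_add \<Rightarrow> int)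
                     \<Rightarrow> (('g \<Rightarrow> nat \<Rightarrow> int) \<times> ('g \<Rightarrow> nat \<Rightarrow> int)) set" where
  "Zset n M N g = {(y, c). y \<in> Yset n M \<and> c \<in> Vset n N \<and>
      (\<lambda>t m. y t m + row_mult n c (mat_star (fmat M g)) t m) \<in> Yset n M}"

text \<open>Z^dagger_{j,s,k}, with dagger encoded by sg = 1 (for +) or sg = -1 (for -).\<close>
definition Zsig :: "nat \<Rightarrow> (nat \<Rightarrow> nat) \<Rightarrow> nat \<Rightarrow> (nat \<Rightarrow> nat \<Rightarrow> 'g::group_add \<Rightarrow> int)
                     \<Rightarrow> int \<Rightarrow> nat \<Rightarrow> 'g \<Rightarrow> nat \<Rightarrow> (('g \<Rightarrow> nat \<Rightarrow> int) \<times> ('g \<Rightarrow> nat \<Rightarrow> int)) set" where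
  "Zsig n M N g sg j s k = {(y, c) \<in> Zset n M N g. sg * c s k = int j \<and>
      (\<forall>t m. m < n \<longrightarrow> \<bar>c t m\<bar> \<le> int j)}"

definition Aset :: "nat \<Rightarrow> (nat \<Rightarrow> nat \<Rightarrow> 'g \<Rightarrow> int) \<Rightarrow> nat \<Rightarrow> ('g \<times> nat) set" where
  "Aset n g k = {(a, m). m < n \<and> g k m a \<noteq> 0}"

definition ZsigB :: "nat \<Rightarrow> (nat \<Rightarrow> nat) \<Rightarrow> nat \<Rightarrow> (nat \<Rightarrow> nat \<Rightarrow> 'g::group_add \<Rightarrow> int)
                     \<Rightarrow> int \<Rightarrow> nat \<Rightarrow> 'g \<Rightarrow> nat \<Rightarrow> ('g \<times> nat) set
                     \<Rightarrow> (('g \<Rightarrow> nat \<Rightarrow> int) \<times> ('g \<Rightarrow> nat \<Rightarrow> int)) set" where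
  "ZsigB n M N g sg j s k B = {(y, c) \<in> Zsig n M N g sg j s k.
      (\<forall>(a, m) \<in> B. c (s + a) m = sg * sgn (g k m a) * int j) \<and>
      (\<forall>(a, m) \<in> Aset n g k - B. c (s + a) m \<noteq> sg * sgn (g k m a) * int j)}"

definition ZsigBi :: "nat \<Rightarrow> (nat \<Rightarrow> nat) \<Rightarrow> nat \<Rightarrow> (nat \<Rightarrow> nat \<Rightarrow> 'g::group_add \<Rightarrow> int)
                     \<Rightarrow> int \<Rightarrow> nat \<Rightarrow> 'g \<Rightarrow> nat \<Rightarrow> ('g \<times> nat) set \<Rightarrow> int
                     \<Rightarrow> (('g \<Rightarrow> nat \<Rightarrow> int) \<times> ('g \<Rightarrow> nat \<Rightarrow> int)) set" where
  "ZsigBi n M N g sg j s k B i = {(y, c) \<in> ZsigB n M N g sg j s k B. y s k = i}"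

definition ltrans :: "'g::group_add \<Rightarrow> 'g set \<Rightarrow> 'g set" where
  "ltrans s E = (\<lambda>p. s + p) ` E"

definition nu_pow :: "(nat \<Rightarrow> int) pmf \<Rightarrow> 'g set \<Rightarrow> ('g \<Rightarrow> nat \<Rightarrow> int) measure" where
  "nu_pow \<nu> E = PiM E (\<lambda>_. measure_pmf \<nu>)"

definition proj :: "'g set \<Rightarrow> ('g \<Rightarrow> nat \<Rightarrow> int) \<Rightarrow> ('g \<Rightarrow> nat \<Rightarrow> int)" where
  "proj E y = restrict y E"

definition ufun :: "nat \<Rightarrow> (nat \<Rightarrow> nat) \<Rightarrow> nat \<Rightarrow> (nat \<Rightarrow> nat \<Rightarrow> 'g::group_add \<Rightarrow> int) \<Rightarrow> 'g set
                     \<Rightarrow> int \<Rightarrow> nat \<Rightarrow> 'g \<Rightarrow> nat \<Rightarrow> ('g \<Rightarrow> nat \<Rightarrow> int) \<Rightarrow> real" where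
  "ufun n M N g P sg j s k x = (\<Sum>i<M k.
      indicator (proj (ltrans s P) ` fst ` (\<Union>B\<in>Pow (Aset n g k). ZsigBi n M N g sg j s k B (int i))) x)"

end

theory Submission
  imports Defs "HOL-Library.Diagonal_Subsequence"
begin

text \<open>Every coordinate of a pair (y, c) in Z = Z^dagger_{j,s,k} ranges over a finite set, and each
  defining condition of Z involves only finitely many coordinates, so Z is sequentially compact in
  the product of discrete topologies. As Gamma is countable, the projection of Z to any coordinate
  set D is therefore the countable intersection of the cylinders over its projections to finite
  subsets of D, hence measurable.

  For the bound, write nu^{s Pbar} = nu (x) nu^{sP}, using s \<notin> sP because e \<notin> P. If X(s := x)
  lies in the projection of Z, then i = x_k is one of the values with X in the projection of
  Z^dagger_{j,s,k,i}. Since the k-th marginal of nu is uniform, the section over X has measure at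
  most u_k(X) / M_k, and integrating over X gives the claim.\<close>

lemma measure_PiM_insert_le_integral:
  fixes M :: "'a measure" and A :: "('i \<Rightarrow> 'a) set"
  assumes "prob_space M" and A: "A \<in> sets (PiM (insert s E) (\<lambda>_. M))"
    and f: "integrable (PiM E (\<lambda>_. M)) f"
    and sec: "\<And>X. X \<in> space (PiM E (\<lambda>_. M)) \<Longrightarrow> measure M {x \<in> space M. X(s := x) \<in> A} \<le> f X"
  shows "measure (PiM (insert s E) (\<lambda>_. M)) A \<le> integral\<^sup>L (PiM E (\<lambda>_. M)) f"
proof -
  interpret M: prob_space M by fact
  interpret PE: prob_space "PiM E (\<lambda>_. M)" by (intro prob_space_PiM M.prob_space_axioms)
  interpret PS: pair_prob_space M "PiM E (\<lambda>_. M)" ..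
  let ?upd = "\<lambda>(x, X). X(s := x)"
  have upd: "?upd \<in> measurable (M \<Otimes>\<^sub>M PiM E (\<lambda>_. M)) (PiM (insert s E) (\<lambda>_. M))"
    by (auto intro!: measurable_fun_upd[where J=E])
  define G where "G = ?upd -` A \<inter> space (M \<Otimes>\<^sub>M PiM E (\<lambda>_. M))"
  have G: "G \<in> sets (M \<Otimes>\<^sub>M PiM E (\<lambda>_. M))" unfolding G_def using upd A by measurable
  have f_nonneg: "0 \<le> f X" if "X \<in> space (PiM E (\<lambda>_. M))" for X
    using sec[OF that] by (meson measure_nonneg order_trans)
  have "emeasure (PiM (insert s E) (\<lambda>_. M)) A
          = emeasure (distr (M \<Otimes>\<^sub>M PiM E (\<lambda>_. M)) (PiM (insert s E) (\<lambda>_. M)) ?upd) A"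
    using distr_pair_PiM_eq_PiM[of E "\<lambda>_. M" s] M.prob_space_axioms by simp
  also have "\<dots> = emeasure (M \<Otimes>\<^sub>M PiM E (\<lambda>_. M)) G"
    unfolding G_def by (rule emeasure_distr[OF upd A])
  also have "\<dots> = (\<integral>\<^sup>+X. emeasure M ((\<lambda>x. (x, X)) -` G) \<partial>PiM E (\<lambda>_. M))"
    by (rule PS.emeasure_pair_measure_alt2[OF G])
  also have "\<dots> \<le> (\<integral>\<^sup>+X. ennreal (f X) \<partial>PiM E (\<lambda>_. M))"
  proof (rule nn_integral_mono)
    fix X assume X: "X \<in> space (PiM E (\<lambda>_. M))"
    have "(\<lambda>x. (x, X)) -` G = {x \<in> space M. X(s := x) \<in> A}"
      using X by (auto simp: G_def space_pair_measure)
    then show "emeasure M ((\<lambda>x. (x, X)) -` G) \<le> ennreal (f X)"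
      using sec[OF X] by (simp add: M.emeasure_eq_measure ennreal_leI)
  qed
  also have "\<dots> = ennreal (integral\<^sup>L (PiM E (\<lambda>_. M)) f)"
    using f f_nonneg by (intro nn_integral_eq_integral) (auto intro: AE_I2)
  finally have "emeasure (PiM (insert s E) (\<lambda>_. M)) A \<le> ennreal (integral\<^sup>L (PiM E (\<lambda>_. M)) f)" .
  moreover have "0 \<le> integral\<^sup>L (PiM E (\<lambda>_. M)) f"
    using f_nonneg by (intro integral_nonneg_AE AE_I2)
  ultimately show ?thesis
    by (simp add: measure_def enn2real_leI)
qed

lemma measure_pmf_uniform_marginal:
  fixes \<nu> :: "'a pmf" and \<phi> :: "'a \<Rightarrow> int"
  assumes uniform: "\<And>i. 0 \<le> i \<Longrightarrow> i < int m \<Longrightarrow> measure_pmf.prob \<nu> {x. \<phi> x = i} = 1 / real m"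
    and I: "I \<subseteq> {..<m}"
  shows "measure_pmf.prob \<nu> {x. \<phi> x \<in> int ` I} = card I / real m"
proof -
  have "measure_pmf.prob \<nu> {x. \<phi> x \<in> int ` I} = measure_pmf.prob \<nu> (\<Union>i\<in>I. {x. \<phi> x = int i})"
    by (rule arg_cong[where f="measure_pmf.prob \<nu>"]) auto
  also have "\<dots> = (\<Sum>i\<in>I. measure_pmf.prob \<nu> {x. \<phi> x = int i})"
    using finite_subset[OF I] by (intro measure_pmf.finite_measure_finite_Union) (auto simp: disjoint_family_on_def)
  also have "\<dots> = (\<Sum>i\<in>I. 1 / real m)"
    by (intro sum.cong refl uniform) (use I in auto)
  also have "\<dots> = card I / real m"
    by simp
  finally show ?thesis .
qed

lemma measure_PiM_insert_pmf_le:
  fixes \<nu> :: "'a pmf" and \<phi> :: "'a \<Rightarrow> int" and U :: "int \<Rightarrow> ('i \<Rightarrow> 'a) set"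
  assumes uniform: "\<And>i. 0 \<le> i \<Longrightarrow> i < int m \<Longrightarrow> measure_pmf.prob \<nu> {x. \<phi> x = i} = 1 / real m"
    and A: "A \<in> sets (PiM (insert s E) (\<lambda>_. measure_pmf \<nu>))"
    and U: "\<And>i. U i \<in> sets (PiM E (\<lambda>_. measure_pmf \<nu>))"
    and sec: "\<And>X x. X \<in> space (PiM E (\<lambda>_. measure_pmf \<nu>)) \<Longrightarrow> X(s := x) \<in> A \<Longrightarrow>
                 0 \<le> \<phi> x \<and> \<phi> x < int m \<and> X \<in> U (\<phi> x)"
  shows "measure (PiM (insert s E) (\<lambda>_. measure_pmf \<nu>)) A
           \<le> 1 / real m * integral\<^sup>L (PiM E (\<lambda>_. measure_pmf \<nu>)) (\<lambda>X. \<Sum>i<m. indicator (U (int i)) X)"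
proof -
  interpret PE: prob_space "PiM E (\<lambda>_. measure_pmf \<nu>)"
    by (intro prob_space_PiM prob_space_measure_pmf)
  have "measure (PiM (insert s E) (\<lambda>_. measure_pmf \<nu>)) A
           \<le> integral\<^sup>L (PiM E (\<lambda>_. measure_pmf \<nu>)) (\<lambda>X. (\<Sum>i<m. indicator (U (int i)) X) / real m)"
  proof (rule measure_PiM_insert_le_integral[OF prob_space_measure_pmf A])
    show "integrable (PiM E (\<lambda>_. measure_pmf \<nu>)) (\<lambda>X. (\<Sum>i<m. indicator (U (int i)) X) / real m)"
      using U by (intro integrable_divide integrable_sum integrable_real_indicator)
        (auto simp: less_top[symmetric])
  next
    fix X assume X: "X \<in> space (PiM E (\<lambda>_. measure_pmf \<nu>))"
    define I where "I = {i \<in> {..<m}. X \<in> U (int i)}"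
    have "{x \<in> space (measure_pmf \<nu>). X(s := x) \<in> A} \<subseteq> {x. \<phi> x \<in> int ` I}"
    proof safe
      fix x assume "X(s := x) \<in> A"
      then have "nat (\<phi> x) \<in> I" "\<phi> x = int (nat (\<phi> x))"
        using sec[OF X] by (auto simp: I_def nat_less_iff)
      then show "\<phi> x \<in> int ` I" by (rule rev_image_eqI)
    qed
    then have "measure_pmf.prob \<nu> {x \<in> space (measure_pmf \<nu>). X(s := x) \<in> A}
                 \<le> measure_pmf.prob \<nu> {x. \<phi> x \<in> int ` I}"
      by (intro measure_pmf.finite_measure_mono) auto
    also have "\<dots> = card I / real m"
      by (rule measure_pmf_uniform_marginal[OF uniform]) (auto simp: I_def)
    also have "card I = (\<Sum>i<m. indicator (U (int i)) X :: real)"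
      by (simp add: I_def indicator_def sum.If_cases Int_def)
    finally show "measure_pmf.prob \<nu> {x \<in> space (measure_pmf \<nu>). X(s := x) \<in> A}
                    \<le> (\<Sum>i<m. indicator (U (int i)) X) / real m" .
  qed
  then show ?thesis by simp
qed

text \<open>Convergence in the product of discrete topologies: each coordinate is eventually constant.\<close>

definition stabilizes_to :: "(nat \<Rightarrow> 'a \<Rightarrow> 'b \<Rightarrow> 'c) \<Rightarrow> ('a \<Rightarrow> 'b \<Rightarrow> 'c) \<Rightarrow> bool" where
  "stabilizes_to xs x \<longleftrightarrow> (\<forall>t k. \<forall>\<^sub>F m in sequentially. xs m t k = x t k)"

definition seq_closed :: "(('a \<Rightarrow> 'b \<Rightarrow> 'c) \<times> ('a \<Rightarrow> 'b \<Rightarrow> 'd)) set \<Rightarrow> bool" where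
  "seq_closed Z \<longleftrightarrow> (\<forall>ys cs y c. (\<forall>m. (ys m, cs m) \<in> Z) \<longrightarrow>
      stabilizes_to ys y \<longrightarrow> stabilizes_to cs c \<longrightarrow> (y, c) \<in> Z)"

lemma seq_closedD:
  "seq_closed Z \<Longrightarrow> (\<And>m. (ys m, cs m) \<in> Z) \<Longrightarrow> stabilizes_to ys y \<Longrightarrow> stabilizes_to cs c \<Longrightarrow> (y, c) \<in> Z"
  unfolding seq_closed_def by blast

lemma stabilizes_to_mem:
  assumes "stabilizes_to xs x" and "\<And>m. xs m t k \<in> R"
  shows "x t k \<in> R"
proof -
  obtain m where "xs m t k = x t k"
    using assms(1) eventually_happens'[OF sequentially_bot] unfolding stabilizes_to_def by blast
  with assms(2) show ?thesis by metis
qed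

lemma stabilizes_to_add:
  assumes "stabilizes_to xs x" and "stabilizes_to ys y"
  shows "stabilizes_to (\<lambda>m t k. xs m t k + ys m t k) (\<lambda>t k. x t k + y t k)"
  unfolding stabilizes_to_def
proof (intro allI)
  fix t k
  have "\<forall>\<^sub>F m in sequentially. xs m t k = x t k" "\<forall>\<^sub>F m in sequentially. ys m t k = y t k"
    using assms unfolding stabilizes_to_def by auto
  then show "\<forall>\<^sub>F m in sequentially. xs m t k + ys m t k = x t k + y t k"
    by eventually_elim simp
qed

lemma eventually_vconv_eq:
  assumes "\<And>t. \<forall>\<^sub>F m in sequentially. xs m t = x t"
  shows "\<forall>\<^sub>F m in sequentially. vconv (xs m) F t = vconv x F t"
proof (cases "finite (supp F)")
  case True
  then have "\<forall>\<^sub>F m in sequentially. \<forall>u\<in>supp F. xs m (t - u) = x (t - u)"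
    using assms by (simp add: eventually_ball_finite)
  then show ?thesis unfolding vconv_def by eventually_elim simp
qed (simp add: vconv_def)

lemma stabilizes_to_row_mult:
  assumes "stabilizes_to cs c"
  shows "stabilizes_to (\<lambda>m. row_mult n (cs m) F) (row_mult n c F)"
  unfolding stabilizes_to_def
proof (intro allI)
  fix t m'
  have "\<forall>\<^sub>F m in sequentially. \<forall>k\<in>{..<n}.
          vconv (\<lambda>t'. cs m t' k) (F k m') t = vconv (\<lambda>t'. c t' k) (F k m') t"
    using assms unfolding stabilizes_to_def by (simp add: eventually_ball_finite eventually_vconv_eq)
  then show "\<forall>\<^sub>F m in sequentially. row_mult n (cs m) F t m' = row_mult n c F t m'"
    unfolding row_mult_def by eventually_elim simp
qed

lemma Yset_iff: "y \<in> Yset n M \<longleftrightarrow> (\<forall>t k. y t k \<in> (if k < n then {0..<int (M k)} else {0}))"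
  by (auto simp: Yset_def Sf_def)

lemma Vset_iff:
  "c \<in> Vset n N \<longleftrightarrow> (\<forall>t m. c t m \<in> (if m < n then {-int N..int N} else {0})) \<and> c \<noteq> (\<lambda>_ _. 0)"
  by (auto simp: Vset_def abs_le_iff; meson minus_le_iff not_le)

lemma Yset_stabilizes_to: "(\<And>m. ys m \<in> Yset n M) \<Longrightarrow> stabilizes_to ys y \<Longrightarrow> y \<in> Yset n M"
  unfolding Yset_iff by (blast intro: stabilizes_to_mem)

lemma seq_closed_Zsig:
  assumes "1 \<le> j"
  shows "seq_closed (Zsig n M N g sg j s k)"
  unfolding seq_closed_def
proof (intro allI impI)
  fix ys cs y c
  assume Z: "\<forall>m. (ys m, cs m) \<in> Zsig n M N g sg j s k"
    and y: "stabilizes_to ys y" and c: "stabilizes_to cs c"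
  let ?F = "mat_star (fmat M g)"
  have "y \<in> Yset n M"
    by (rule Yset_stabilizes_to[OF _ y]) (use Z in \<open>auto simp: Zsig_def Zset_def\<close>)
  moreover have "(\<lambda>t m. y t m + row_mult n c ?F t m) \<in> Yset n M"
    by (rule Yset_stabilizes_to[OF _ stabilizes_to_add[OF y stabilizes_to_row_mult[OF c]]])
      (use Z in \<open>auto simp: Zsig_def Zset_def\<close>)
  moreover have cs: "sg * c s k = int j"
    by (rule stabilizes_to_mem[OF c, where R="{v. sg * v = int j}", simplified])
      (use Z in \<open>auto simp: Zsig_def\<close>)
  moreover have "\<bar>c t m\<bar> \<le> int j" if "m < n" for t m
    by (rule stabilizes_to_mem[OF c, where R="{v. \<bar>v\<bar> \<le> int j}", simplified])
      (use Z that in \<open>auto simp: Zsig_def\<close>)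
  moreover have "c \<in> Vset n N"
    unfolding Vset_iff
  proof
    show "\<forall>t m. c t m \<in> (if m < n then {-int N..int N} else {0})"
      using Z by (intro allI stabilizes_to_mem[OF c]) (auto simp: Zsig_def Zset_def Vset_iff)
    show "c \<noteq> (\<lambda>_ _. 0)"
      using cs assms by auto
  qed
  ultimately show "(y, c) \<in> Zsig n M N g sg j s k"
    by (auto simp: Zsig_def Zset_def)
qed

lemma seq_closed_fst_eq:
  assumes "seq_closed Z"
  shows "seq_closed {p \<in> Z. fst p t k = i}"
  unfolding seq_closed_def
proof (intro allI impI)
  fix ys cs y c
  assume Z: "\<forall>m. (ys m, cs m) \<in> {p \<in> Z. fst p t k = i}"
    and y: "stabilizes_to ys y" and c: "stabilizes_to cs c"
  have "(y, c) \<in> Z"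
    using seq_closedD[OF assms _ y c] Z by simp
  moreover have "y t k = i"
    using stabilizes_to_mem[OF y, where R="{i}"] Z by simp
  ultimately show "(y, c) \<in> {p \<in> Z. fst p t k = i}" by simp
qed

lemma finite_Sf: "finite (Sf n M)"
proof -
  have "inj_on (\<lambda>x. restrict x {..<n}) (Sf n M)"
    by (rule inj_onI) (auto simp: Sf_def fun_eq_iff restrict_def split: if_splits; metis not_le)
  moreover have "(\<lambda>x. restrict x {..<n}) ` Sf n M \<subseteq> PiE {..<n} (\<lambda>k. {0..<int (M k)})"
    by (auto simp: Sf_def PiE_iff split: if_splits)
  ultimately show ?thesis
    by (meson finite_PiE finite_atLeastLessThan_int finite_imageD finite_lessThan finite_subset)
qed

lemma sets_PiM_pmf_countable:
  fixes \<nu> :: "'a pmf"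
  assumes "finite I" and "countable S" and "S \<subseteq> extensional I"
  shows "S \<in> sets (PiM I (\<lambda>_. measure_pmf \<nu>))"
proof -
  have "PiE I (\<lambda>i. {z i}) = {z}" if "z \<in> S" for z
    using PiE_eq_singleton[of I "\<lambda>i. {z i}" z] extensional_restrict[of z I] that assms(3) by auto
  then have "S = (\<Union>z\<in>S. PiE I (\<lambda>i. {z i}))"
    by auto
  also have "\<dots> \<in> sets (PiM I (\<lambda>_. measure_pmf \<nu>))"
    using assms(1,2) by (intro sets.countable_UN' sets_PiM_I_finite) auto
  finally show ?thesis .
qed

lemma subseq_eventually_const:
  fixes f :: "nat \<Rightarrow> 'i \<Rightarrow> 'a"
  assumes "countable (UNIV :: 'i set)" and "\<And>i. finite (K i)" and "\<And>m i. f m i \<in> K i"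
  shows "\<exists>r z. strict_mono r \<and> (\<forall>i. \<forall>\<^sub>F m in sequentially. f (r m) i = z i)"
proof -
  define e where "e = from_nat_into (UNIV :: 'i set)"
  define const_on where "const_on n (r :: nat \<Rightarrow> nat) \<longleftrightarrow> (\<exists>v. \<forall>m. f (r m) (e n) = v)" for n r
  interpret subseqs const_on
  proof
    fix n and r :: "nat \<Rightarrow> nat"
    have "finite (range (\<lambda>m. f (r m) (e n)))"
      using assms(2,3) by (meson finite_subset image_subset_iff)
    then obtain v where "infinite ((\<lambda>m. f (r m) (e n)) -` {v})"
      by (rule inf_img_fin_domE) (rule infinite_UNIV_nat)
    then have inf: "infinite {m. f (r m) (e n) = v}"
      by (simp add: vimage_def)
    have "strict_mono (enumerate {m. f (r m) (e n) = v})"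
      using inf by (simp add: strict_mono_enumerate)
    moreover have "const_on n (r \<circ> enumerate {m. f (r m) (e n) = v})"
      using enumerate_in_set[OF inf] by (auto simp: const_on_def)
    ultimately show "\<exists>r'. strict_mono r' \<and> const_on n (r \<circ> r')" by blast
  qed
  have const: "\<forall>\<^sub>F m in sequentially. f (diagseq m) i = f (diagseq (Suc (to_nat_on UNIV i))) i" for i
  proof -
    have e: "e (to_nat_on UNIV i) = i"
      unfolding e_def using assms(1) by simp
    obtain v where v: "\<And>m. f (diagseq (Suc (to_nat_on UNIV i) + m)) i = v"
      using diagseq_holds[of "to_nat_on UNIV i"] e by (auto simp: const_on_def)
    show ?thesis
      unfolding eventually_sequentially
    proof (intro exI allI impI)
      fix m assume "Suc (to_nat_on UNIV i) \<le> m"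
      then obtain d where "m = Suc (to_nat_on UNIV i) + d"
        using le_Suc_ex by blast
      then show "f (diagseq m) i = f (diagseq (Suc (to_nat_on UNIV i))) i"
        using v[of d] v[of 0] by simp
    qed
  qed
  show ?thesis
    by (intro exI[of _ diagseq] exI[of _ "\<lambda>i. f (diagseq (Suc (to_nat_on UNIV i))) i"]
        conjI allI subseq_diagseq const)
qed

lemma Yset_Vset_subseq_stabilizes:
  fixes ys cs :: "nat \<Rightarrow> 'g \<Rightarrow> nat \<Rightarrow> int"
  assumes "countable (UNIV :: 'g set)"
    and "\<And>m. (ys m, cs m) \<in> Yset n M \<times> Vset n N"
  shows "\<exists>r y c. strict_mono r \<and> stabilizes_to (ys \<circ> r) y \<and> stabilizes_to (cs \<circ> r) c"
proof -
  define w where "w m = (\<lambda>(t :: 'g, k). (ys m t k, cs m t k))" for m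
  define K where "K = (\<lambda>(t :: 'g, k). {0..int (M k)} \<times> {-int N..int N})"
  have "w m q \<in> K q" for m q
  proof -
    obtain t k where q: "q = (t, k)"
      by force
    have "ys m \<in> Yset n M" "cs m \<in> Vset n N"
      using assms(2) by auto
    then have "ys m t k \<in> {0..int (M k)}" "cs m t k \<in> {-int N..int N}"
      unfolding Yset_iff Vset_iff by (auto dest!: spec[of _ t] spec[of _ k] split: if_splits)
    then show ?thesis
      by (simp add: q w_def K_def)
  qed
  moreover have "countable (UNIV :: ('g \<times> nat) set)"
    using assms(1) by (simp add: UNIV_Times_UNIV[symmetric] del: UNIV_Times_UNIV)
  ultimately obtain r z where r: "strict_mono r"
    and rz: "\<And>q. \<forall>\<^sub>F m in sequentially. w (r m) q = z q"
    using subseq_eventually_const[of K w] by (auto simp: K_def split: prod.splits)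
  have ev: "\<forall>\<^sub>F m in sequentially. ys (r m) t k = fst (z (t, k)) \<and> cs (r m) t k = snd (z (t, k))"
    for t k
    using rz[of "(t, k)"] by (simp add: w_def prod_eq_iff)
  have "stabilizes_to (ys \<circ> r) (\<lambda>t k. fst (z (t, k)))"
    and "stabilizes_to (cs \<circ> r) (\<lambda>t k. snd (z (t, k)))"
    unfolding stabilizes_to_def by (auto intro: eventually_mono[OF ev])
  with r show ?thesis
    by blast
qed

lemma proj_image_of_approximations:
  fixes Z :: "(('g \<Rightarrow> nat \<Rightarrow> int) \<times> ('g \<Rightarrow> nat \<Rightarrow> int)) set"
  assumes cnt: "countable (UNIV :: 'g set)" and closed: "seq_closed Z"
    and bounded: "Z \<subseteq> Yset n M \<times> Vset n N"
    and x: "x \<in> extensional D" and exhaust: "\<And>d. d \<in> D \<Longrightarrow> \<forall>\<^sub>F i in sequentially. d \<in> F i"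
    and approx: "\<And>i. \<exists>p\<in>Z. \<forall>d\<in>F i. fst p d = x d"
  shows "x \<in> proj D ` fst ` Z"
proof -
  obtain p where p: "\<And>i. p i \<in> Z" and px: "\<And>i d. d \<in> F i \<Longrightarrow> fst (p i) d = x d"
    using approx by metis
  obtain r y c where r: "strict_mono r"
    and y: "stabilizes_to (fst \<circ> p \<circ> r) y" and c: "stabilizes_to (snd \<circ> p \<circ> r) c"
    using Yset_Vset_subseq_stabilizes[OF cnt, of "fst \<circ> p" "snd \<circ> p" n M N] p bounded
    by (metis comp_apply prod.collapse subsetD)
  have "(y, c) \<in> Z"
    using seq_closedD[OF closed _ y c] p by simp
  moreover have "x = proj D y"
  proof
    fix d
    show "x d = proj D y d"
    proof (cases "d \<in> D")
      case True
      have "\<forall>\<^sub>F m in sequentially. d \<in> F (r m)"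
        using eventually_subseq[OF r exhaust[OF True]] .
      then have "\<forall>\<^sub>F m in sequentially. fst (p (r m)) d = x d"
        by (rule eventually_mono) (rule px)
      then have ev: "\<forall>\<^sub>F m in sequentially. fst (p (r m)) d = x d \<and> fst (p (r m)) d k = y d k" for k
        using y unfolding stabilizes_to_def by (intro eventually_conj) auto
      have "x d k = y d k" for k
        using eventually_happens'[OF sequentially_bot ev[of k]] by auto
      then show ?thesis
        using True by (auto simp: proj_def)
    qed (use x in \<open>auto simp: proj_def extensional_def\<close>)
  qed
  ultimately show ?thesis by force
qed

lemma proj_image_in_sets_finite:
  assumes "finite F" and "Z \<subseteq> Yset n M \<times> Vset n N"
  shows "proj F ` fst ` Z \<in> sets (nu_pow \<nu> F)"
  unfolding nu_pow_def
proof (rule sets_PiM_pmf_countable[OF assms(1)])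
  have "proj F ` fst ` Z \<subseteq> PiE F (\<lambda>_. Sf n M)"
    using assms(2) by (auto simp: proj_def Yset_def)
  moreover have "finite (PiE F (\<lambda>_. Sf n M))"
    using assms(1) by (intro finite_PiE finite_Sf)
  ultimately show "countable (proj F ` fst ` Z)"
    by (meson countable_finite finite_subset)
  show "proj F ` fst ` Z \<subseteq> extensional F"
    by (auto simp: proj_def)
qed

lemma proj_image_in_sets:
  fixes Z :: "(('g \<Rightarrow> nat \<Rightarrow> int) \<times> ('g \<Rightarrow> nat \<Rightarrow> int)) set"
  assumes cnt: "countable (UNIV :: 'g set)" and closed: "seq_closed Z"
    and bounded: "Z \<subseteq> Yset n M \<times> Vset n N"
  shows "proj D ` fst ` Z \<in> sets (nu_pow \<nu> D)"
proof -
  define F where "F i = D \<inter> from_nat_into UNIV ` {..<i}" for i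
  define C where "C i = (\<lambda>x. restrict x (F i)) -` (proj (F i) ` fst ` Z) \<inter> space (nu_pow \<nu> D)" for i
  have C: "C i \<in> sets (nu_pow \<nu> D)" for i
    unfolding C_def using proj_image_in_sets_finite[OF _ bounded, of "F i" \<nu>]
    by (auto simp: F_def nu_pow_def intro: measurable_sets[OF measurable_restrict_subset])
  have "proj D ` fst ` Z = (\<Inter>i. C i)"
  proof (intro equalityI subsetI)
    fix x assume "x \<in> proj D ` fst ` Z"
    then obtain p where p: "p \<in> Z" "x = restrict (fst p) D"
      by (auto simp: proj_def)
    then have "restrict x (F i) = proj (F i) (fst p)" for i
      by (auto simp: proj_def F_def)
    then show "x \<in> (\<Inter>i. C i)"
      using p by (auto simp: C_def nu_pow_def space_PiM)
  next
    fix x assume x: "x \<in> (\<Inter>i. C i)"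
    show "x \<in> proj D ` fst ` Z"
    proof (rule proj_image_of_approximations[OF cnt closed bounded])
      show "x \<in> extensional D"
        using x by (auto simp: C_def nu_pow_def space_PiM PiE_def)
      show "\<forall>\<^sub>F i in sequentially. d \<in> F i" if "d \<in> D" for d
      proof -
        obtain i where "from_nat_into UNIV i = d"
          using from_nat_into_surj[OF cnt UNIV_I] by blast
        then show ?thesis
          using that unfolding eventually_sequentially F_def by (auto intro!: exI[of _ "Suc i"])
      qed
      show "\<exists>p\<in>Z. \<forall>d\<in>F i. fst p d = x d" for i
      proof -
        have "restrict x (F i) \<in> proj (F i) ` fst ` Z"
          using x by (auto simp: C_def)
        then obtain p where "p \<in> Z" "restrict x (F i) = restrict (fst p) (F i)"
          by (auto simp: proj_def)
        then show ?thesis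
          by (metis restrict_apply')
      qed
    qed
  qed
  then show ?thesis
    using C by (simp add: sets.countable_INT')
qed

lemma fun_upd_in_proj_image:
  assumes "s \<notin> E" and "X \<in> extensional E" and "X(s := x) \<in> proj (insert s E) ` Y"
  shows "\<exists>y\<in>Y. y s = x \<and> X = proj E y"
proof -
  obtain y where y: "y \<in> Y" "X(s := x) = restrict y (insert s E)"
    using assms(3) by (auto simp: proj_def)
  then have "y s = x"
    by (metis fun_upd_same insertI1 restrict_apply')
  moreover have "X = restrict y E"
  proof
    fix d show "X d = restrict y E d"
      using fun_cong[OF y(2), of d] assms(1,2) by (cases "d = s") (auto simp: extensional_def)
  qed
  ultimately show ?thesis
    using y(1) by (auto simp: proj_def)
qed

lemma Zsig_subset: "Zsig n M N g sg j s k \<subseteq> Yset n M \<times> Vset n N"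
  by (auto simp: Zsig_def Zset_def)

lemma Zsig_section:
  assumes "s \<notin> E" and "X \<in> extensional E" and "k < n"
    and "X(s := x) \<in> proj (insert s E) ` fst ` Zsig n M N g sg j s k"
  shows "0 \<le> x k \<and> x k < int (M k) \<and> X \<in> proj E ` fst ` {p \<in> Zsig n M N g sg j s k. fst p s k = x k}"
proof -
  obtain y c where yc: "(y, c) \<in> Zsig n M N g sg j s k" "y s = x" "X = proj E y"
    using fun_upd_in_proj_image[OF assms(1,2,4)] by auto
  then have "y \<in> Yset n M"
    using Zsig_subset by blast
  then show ?thesis
    using yc assms(3) by (force simp: Yset_def Sf_def)
qed

lemma ltrans_self_notin: "0 \<notin> P \<Longrightarrow> s \<notin> ltrans s P"
  by (auto simp: ltrans_def) (metis add.right_neutral add_left_cancel)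

lemma Union_ZsigBi:
  "(\<Union>B\<in>Pow (Aset n g k). ZsigBi n M N g sg j s k B i) = {p \<in> Zsig n M N g sg j s k. fst p s k = i}"
proof (intro equalityI subsetI)
  fix p assume "p \<in> {p \<in> Zsig n M N g sg j s k. fst p s k = i}"
  moreover obtain y c where "p = (y, c)" by force
  moreover define B where "B = {(a, m) \<in> Aset n g k. c (s + a) m = sg * sgn (g k m a) * int j}"
  ultimately have "p \<in> ZsigBi n M N g sg j s k B i" and "B \<in> Pow (Aset n g k)"
    by (auto simp: ZsigBi_def ZsigB_def)
  then show "p \<in> (\<Union>B\<in>Pow (Aset n g k). ZsigBi n M N g sg j s k B i)"
    by blast
qed (auto simp: ZsigBi_def ZsigB_def)

theorem lemma4p5:
  fixes n N j k :: nat and M :: "nat \<Rightarrow> nat" and g :: "nat \<Rightarrow> nat \<Rightarrow> 'g::group_add \<Rightarrow> int"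
    and P :: "'g set" and \<nu> :: "(nat \<Rightarrow> int) pmf" and h :: "nat \<Rightarrow> nat \<Rightarrow> 'g \<Rightarrow> real"
    and s :: 'g and sg :: int
  assumes "countable (UNIV :: 'g set)" and "infinite (UNIV :: 'g set)"
    and "\<forall>k<n. 0 < M k"
    and "\<forall>k<n. \<forall>m<n. finite (supp (g k m))"
    and "\<forall>k<n. (\<Sum>m<n. \<Sum>a\<in>supp (g k m). \<bar>g k m a\<bar>) < int (M k)"
    and "0 \<notin> P" and "\<forall>a\<in>P. \<forall>b\<in>P. a + b \<in> P"
    and "\<forall>k<n. \<forall>m<n. supp (g k m) \<subseteq> P"
    and "set_pmf \<nu> \<subseteq> Sf n M"
    and "\<forall>k<n. \<forall>i. 0 \<le> i \<and> i < int (M k) \<longrightarrow> measure_pmf.prob \<nu> {x. x k = i} = 1 / real (M k)"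
    and "is_l1_inverse n (mat_star (fmat M g)) h"
    and "real (Max (M ` {..<n})) * norm_1inf n h \<le> real N"
    and "j \<in> {1..N}" and "k < n" and "sg \<in> {1, -1}"
  shows "proj (ltrans s P \<union> {s}) ` fst ` Zsig n M N g sg j s k \<in> sets (nu_pow \<nu> (ltrans s P \<union> {s}))
       \<and> measure (nu_pow \<nu> (ltrans s P \<union> {s})) (proj (ltrans s P \<union> {s}) ` fst ` Zsig n M N g sg j s k)
           \<le> 1 / real (M k) * integral\<^sup>L (nu_pow \<nu> (ltrans s P)) (ufun n M N g P sg j s k)"
proof -
  define E where "E = ltrans s P"
  define Z where "Z = Zsig n M N g sg j s k"
  define U where "U i = proj E ` fst ` {p \<in> Z. fst p s k = i}" for i
  have sE: "s \<notin> E"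
    using assms(6) by (simp add: E_def ltrans_self_notin)
  have closed: "seq_closed Z"
    using assms(13) by (simp add: Z_def seq_closed_Zsig)
  have bounded: "Z \<subseteq> Yset n M \<times> Vset n N"
    by (simp add: Z_def Zsig_subset)
  have A: "proj (insert s E) ` fst ` Z \<in> sets (nu_pow \<nu> (insert s E))"
    by (rule proj_image_in_sets[OF assms(1) closed bounded])
  have "measure (nu_pow \<nu> (insert s E)) (proj (insert s E) ` fst ` Z)
          \<le> 1 / real (M k) * integral\<^sup>L (nu_pow \<nu> E) (\<lambda>X. \<Sum>i<M k. indicator (U (int i)) X)"
    unfolding nu_pow_def
  proof (rule measure_PiM_insert_pmf_le[where \<phi>="\<lambda>x. x k"])
    show "U i \<in> sets (PiM E (\<lambda>_. measure_pmf \<nu>))" for i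
      unfolding U_def nu_pow_def[symmetric] using bounded
      by (intro proj_image_in_sets[OF assms(1) seq_closed_fst_eq[OF closed]]) auto
    show "0 \<le> x k \<and> x k < int (M k) \<and> X \<in> U (x k)"
      if "X \<in> space (PiM E (\<lambda>_. measure_pmf \<nu>))" "X(s := x) \<in> proj (insert s E) ` fst ` Z" for X x
      using Zsig_section[OF sE _ assms(14)] that by (auto simp: U_def Z_def space_PiM PiE_def)
  qed (use A assms(10,14) in \<open>auto simp: nu_pow_def\<close>)
  moreover have "ufun n M N g P sg j s k = (\<lambda>X. \<Sum>i<M k. indicator (U (int i)) X)"
    by (simp add: fun_eq_iff ufun_def U_def Union_ZsigBi E_def Z_def)
  ultimately show ?thesis
    using A by (simp add: E_def Z_def)
qed

end
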